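(* Let $R$ be a commutative ring and $n\ge3$. Let $v,w_1,w_2\in R^n$ with $q(v,w_1)=q(v,w_2)=1$. Then $(v,w_1)$ and $(v,w_2)$ lie in the same $EO_{2n}(R)$-orbit and in the same $\operatorname{Epin}_{2n}(R)$-orbit of $H(R^n)$.
   Context: $H(R^n)=R^n\oplus(R^n)^*$ (elements written as pairs $(v,w)$ of row vectors) with quadratic form $q(v,w)=v\cdot w^{\intercal}$ and standard basis $e_1,\dots,e_n,f_1,\dots,f_n$. Let $\partial=(1\ n+1)\cdots(n\ 2n)$ and $E^o_{ij}(\lambda)=I_{2n}+\lambda(e_{ij}-e_{\partial(j)\partial(i)})$ for $1\le i\ne j\le 2n$, $\lambda\in R$; $EO_{2n}(R)$ is the group they generate, acting on $H(R^n)$ via matrices in the ordered basis $(e_1,\dots,e_n,f_1,\dots,f_n)$ (the group is closed under transposition, so row/column conventions give the same orbits). $\mathrm{Cl}=\mathrm{Cl}_0\oplus\mathrm{Cl}_1$ is the Clifford algebra of $(H(R^n),q)$, $x\mapsto x^*$ its canonical involution (identity on $H(R^n)$). $\operatorname{Spin}_{2n}(R)=\{x\in\mathrm{Cl}_0: xx^*=1,\ xH(R^n)x^{-1}=H(R^n)\}$, acting on $H(R^n)$ by $\pi(g)(u)=gug^{-1}$, and $\operatorname{Epin}_{2n}(R)=\pi^{-1}(EO_{2n}(R))$. *)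

theory Defs
  imports Main
begin

text \<open>The hyperbolic space H(R^n) = R^n + (R^n)^*
is represented by coordinate functions u :: nat => R, where u 0..u (n-1) are the coordinates
w.r.t. e_1..e_n and u n..u (2n-1) those w.r.t. f_1..f_n (other coordinates are ignored).\<close>

definition hv :: "nat \<Rightarrow> (nat \<Rightarrow> 'a::comm_ring_1) \<Rightarrow> (nat \<Rightarrow> 'a) \<Rightarrow> (nat \<Rightarrow> 'a)" where
  "hv n v w = (\<lambda>i. if i < n then v i else if i < 2*n then w (i - n) else 0)"

definition qf :: "nat \<Rightarrow> (nat \<Rightarrow> 'a::comm_ring_1) \<Rightarrow> (nat \<Rightarrow> 'a) \<Rightarrow> 'a" where
  "qf n v w = (\<Sum>i<n. v i * w i)"

definition qH :: "nat \<Rightarrow> (nat \<Rightarrow> 'a::comm_ring_1) \<Rightarrow> 'a" where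
  "qH n u = (\<Sum>i<n. u i * u (n + i))"

text \<open>Matrices: nat => nat => R, indices 0..2n-1 (basis e_1..e_n,f_1..f_n).\<close>

definition dperm :: "nat \<Rightarrow> nat \<Rightarrow> nat" where
  "dperm n i = (if i < n then i + n else i - n)"

definition idm :: "nat \<Rightarrow> nat \<Rightarrow> 'a::comm_ring_1" where
  "idm i j = (if i = j then 1 else 0)"

definition Eo :: "nat \<Rightarrow> nat \<Rightarrow> nat \<Rightarrow> 'a::comm_ring_1 \<Rightarrow> nat \<Rightarrow> nat \<Rightarrow> 'a" where
  "Eo n i j l = (\<lambda>a b. idm a b
      + l * ((if a = i \<and> b = j then 1 else 0) - (if a = dperm n j \<and> b = dperm n i then 1 else 0)))"

definition mmul :: "nat \<Rightarrow> (nat \<Rightarrow> nat \<Rightarrow> 'a::comm_ring_1) \<Rightarrow> (nat \<Rightarrow> nat \<Rightarrow> 'a) \<Rightarrow> nat \<Rightarrow> nat \<Rightarrow> 'a" where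
  "mmul n A B = (\<lambda>a b. \<Sum>k<2*n. A a k * B k b)"

definition mv :: "nat \<Rightarrow> (nat \<Rightarrow> nat \<Rightarrow> 'a::comm_ring_1) \<Rightarrow> (nat \<Rightarrow> 'a) \<Rightarrow> nat \<Rightarrow> 'a" where
  "mv n A u = (\<lambda>a. \<Sum>k<2*n. A a k * u k)"

text \<open>EO_{2n}(R): generated by the E^o_ij(l). Since E^o_ij(l)^{-1} = E^o_ij(-l), the
submonoid generated by them is already the subgroup generated by them.\<close>
inductive_set EO :: "nat \<Rightarrow> (nat \<Rightarrow> nat \<Rightarrow> 'a::comm_ring_1) set" for n where
  EO_id: "idm \<in> EO n"
| EO_step: "M \<in> EO n \<Longrightarrow> i < 2*n \<Longrightarrow> j < 2*n \<Longrightarrow> i \<noteq> j \<Longrightarrow> mmul n M (Eo n i j l) \<in> EO n"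

text \<open>Free (tensor) algebra on generators 0..2n-1: functions from words to R with finite support.
The Clifford algebra is its quotient by the two-sided ideal generated by u*u - q(u), u in H(R^n);
we work with representatives and the congruence cl_eq.\<close>

definition fa_mul :: "(nat list \<Rightarrow> 'a::comm_ring_1) \<Rightarrow> (nat list \<Rightarrow> 'a) \<Rightarrow> nat list \<Rightarrow> 'a" where
  "fa_mul x y = (\<lambda>w. \<Sum>k\<le>length w. x (take k w) * y (drop k w))"

definition fa_one :: "nat list \<Rightarrow> 'a::comm_ring_1" where
  "fa_one = (\<lambda>w. if w = [] then 1 else 0)"

definition fa_A :: "nat \<Rightarrow> (nat list \<Rightarrow> 'a::comm_ring_1) set" where
  "fa_A n = {x. finite {w. x w \<noteq> 0} \<and> (\<forall>w. x w \<noteq> 0 \<longrightarrow> set w \<subseteq> {..<2*n})}"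

definition vec :: "nat \<Rightarrow> (nat \<Rightarrow> 'a::comm_ring_1) \<Rightarrow> nat list \<Rightarrow> 'a" where
  "vec n u = (\<lambda>w. case w of [i] \<Rightarrow> (if i < 2*n then u i else 0) | _ \<Rightarrow> 0)"

inductive_set cl_ideal :: "nat \<Rightarrow> (nat list \<Rightarrow> 'a::comm_ring_1) set" for n where
  cl_gen: "(\<lambda>w. fa_mul (vec n u) (vec n u) w - qH n u * fa_one w) \<in> cl_ideal n"
| cl_zero: "(\<lambda>w. 0) \<in> cl_ideal n"
| cl_add: "a \<in> cl_ideal n \<Longrightarrow> b \<in> cl_ideal n \<Longrightarrow> (\<lambda>w. a w + b w) \<in> cl_ideal n"
| cl_mul: "a \<in> cl_ideal n \<Longrightarrow> x \<in> fa_A n \<Longrightarrow> y \<in> fa_A n \<Longrightarrow> fa_mul (fa_mul x a) y \<in> cl_ideal n"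

definition cl_eq :: "nat \<Rightarrow> (nat list \<Rightarrow> 'a::comm_ring_1) \<Rightarrow> (nat list \<Rightarrow> 'a) \<Rightarrow> bool" where
  "cl_eq n x y \<longleftrightarrow> (\<lambda>w. x w - y w) \<in> cl_ideal n"

text \<open>Canonical involution: the anti-automorphism that is the identity on H(R^n) (word reversal).\<close>
definition cstar :: "(nat list \<Rightarrow> 'a::comm_ring_1) \<Rightarrow> nat list \<Rightarrow> 'a" where
  "cstar x = (\<lambda>w. x (rev w))"

definition is_even :: "(nat list \<Rightarrow> 'a::comm_ring_1) \<Rightarrow> bool" where
  "is_even x \<longleftrightarrow> (\<forall>w. odd (length w) \<longrightarrow> x w = 0)"

text \<open>Spin_{2n}(R), via representatives in Cl_0 (even elements of the free algebra).
x x^* = 1 makes x^* the inverse of x (we also record x^* x = 1, which is automatic since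
Cl is a finitely generated free R-module), so x H x^{-1} = H reads x H x^* = H.\<close>
definition Spin :: "nat \<Rightarrow> (nat list \<Rightarrow> 'a::comm_ring_1) set" where
  "Spin n = {g \<in> fa_A n. is_even g
     \<and> cl_eq n (fa_mul g (cstar g)) fa_one \<and> cl_eq n (fa_mul (cstar g) g) fa_one
     \<and> (\<forall>u. \<exists>u'. cl_eq n (fa_mul (fa_mul g (vec n u)) (cstar g)) (vec n u'))
     \<and> (\<forall>u'. \<exists>u. cl_eq n (fa_mul (fa_mul g (vec n u)) (cstar g)) (vec n u'))}"

text \<open>Epin_{2n}(R) = pi^{-1}(EO_{2n}(R)), pi(g)(u) = g u g^{-1}.\<close>
definition Epin :: "nat \<Rightarrow> (nat list \<Rightarrow> 'a::comm_ring_1) set" where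
  "Epin n = {g \<in> Spin n. \<exists>M \<in> EO n.
     \<forall>u. cl_eq n (fa_mul (fa_mul g (vec n u)) (cstar g)) (vec n (mv n M u))}"

end

theory Submission
  imports Defs
begin

(* The elementary matrix E^o_{n+k,j}(c) fixes the first component of (v,w) and adds
   c (v_j f_k - v_k f_j) to the second one.  Composing these for all k, j with
   c_kj = (w2_k - w1_k) w1_j adds (w2 - w1) q(v,w1) - w1 q(v,w2 - w1) = w2 - w1; this proves the
   EO statement for every n.
   For the Epin statement it suffices to lift every E^o_ij(l) to Spin.  Let b_1, ..., b_2n be the
   basis e_1, ..., f_n and B the polar form of q.  The vectors x = l b_i and u = b_{\<partial>(j)} are
   isotropic and orthogonal, so g = 1 + x u satisfies g g^* = 1 and
   g z g^* = z + B(u,z) x - B(x,z) u = E^o_ij(l) z. *)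

section \<open>The free algebra\<close>

lemma fa_mul_assoc: "fa_mul (fa_mul x y) z = fa_mul x (fa_mul y z)"
proof
  fix w :: "nat list"
  define N where "N = length w"
  define g where "g = (\<lambda>l m. x (take l w) * y (take m (drop l w)) * z (drop (l+m) w))"
  have "fa_mul (fa_mul x y) z w = (\<Sum>k\<le>N. \<Sum>l\<le>k. g l (k - l))"
    unfolding fa_mul_def N_def[symmetric]
    by (intro sum.cong refl) (simp add: sum_distrib_right N_def g_def min_def drop_take)
  also have "\<dots> = (\<Sum>(l,m)\<in>{(i,j). i+j \<le> N}. g l m)"
    by (rule sum.triangle_reindex_eq[symmetric])
  also have "{(i,j). i+j \<le> N} = Sigma {..N} (\<lambda>i. {..N-i})"
    by auto
  also have "(\<Sum>(l,m)\<in>Sigma {..N} (\<lambda>i. {..N-i}). g l m) = (\<Sum>l\<le>N. \<Sum>m\<le>N-l. g l m)"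
    by (rule sum.Sigma[symmetric]) auto
  also have "\<dots> = fa_mul x (fa_mul y z) w"
    unfolding fa_mul_def N_def[symmetric]
    by (intro sum.cong refl) (simp add: sum_distrib_left N_def g_def mult.assoc add.commute)
  finally show "fa_mul (fa_mul x y) z w = fa_mul x (fa_mul y z) w" .
qed

lemma fa_mul_one_left: "fa_mul fa_one x = x"
proof
  fix w :: "nat list"
  have "fa_mul fa_one x w = (\<Sum>k\<le>length w. if k = 0 then x w else 0)"
    unfolding fa_mul_def fa_one_def by (intro sum.cong refl) auto
  then show "fa_mul fa_one x w = x w" by simp
qed

lemma fa_mul_one_right: "fa_mul x fa_one = x"
proof
  fix w :: "nat list"
  have "fa_mul x fa_one w = (\<Sum>k\<le>length w. if k = length w then x w else 0)"
    unfolding fa_mul_def fa_one_def by (intro sum.cong refl) auto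
  then show "fa_mul x fa_one w = x w" by simp
qed

lemma cstar_fa_mul: "cstar (fa_mul x y) = fa_mul (cstar y) (cstar x)"
proof
  fix w :: "nat list"
  define N where "N = length w"
  have "cstar (fa_mul x y) w = (\<Sum>k\<le>N. x (take k (rev w)) * y (drop k (rev w)))"
    by (simp add: cstar_def fa_mul_def N_def)
  also have "\<dots> = (\<Sum>k\<in>{0..N}. x (take (N + 0 - k) (rev w)) * y (drop (N + 0 - k) (rev w)))"
    by (subst sum.atLeastAtMost_rev) (simp add: atLeast0AtMost)
  also have "\<dots> = (\<Sum>k\<le>N. y (rev (take k w)) * x (rev (drop k w)))"
    by (auto simp: atLeast0AtMost take_rev drop_rev N_def mult.commute intro!: sum.cong)
  also have "\<dots> = fa_mul (cstar y) (cstar x) w"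
    by (simp add: cstar_def fa_mul_def N_def)
  finally show "cstar (fa_mul x y) w = fa_mul (cstar y) (cstar x) w" .
qed

lemma fa_mul_nonzero_split:
  assumes "fa_mul x y w \<noteq> 0"
  obtains k where "x (take k w) \<noteq> 0" "y (drop k w) \<noteq> 0"
proof -
  from assms obtain k where "x (take k w) * y (drop k w) \<noteq> 0"
    unfolding fa_mul_def by (rule sum.not_neutral_contains_not_neutral)
  then show ?thesis using that by (metis mult_zero_left mult_zero_right)
qed

lemma fa_A_if_support_subset:
  assumes "finite S" "\<And>w. x w \<noteq> 0 \<Longrightarrow> w \<in> S \<and> set w \<subseteq> {..<2*n}"
  shows "x \<in> fa_A n"
  using assms by (auto simp: fa_A_def intro: finite_subset)

lemma fa_A_one: "fa_one \<in> fa_A n"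
  by (rule fa_A_if_support_subset[of "{[]}"]) (auto simp: fa_one_def split: if_splits)

lemma fa_A_scalar: "(\<lambda>w. if w = [] then c else 0) \<in> fa_A n"
  by (rule fa_A_if_support_subset[of "{[]}"]) (auto split: if_splits)

lemma fa_A_vec: "vec n u \<in> fa_A n"
proof (rule fa_A_if_support_subset[of "(\<lambda>i. [i]) ` {..<2*n}"])
  fix w assume "vec n u w \<noteq> 0"
  then show "w \<in> (\<lambda>i. [i]) ` {..<2*n} \<and> set w \<subseteq> {..<2*n}"
    by (cases w rule: remdups_adj.cases) (auto simp: vec_def split: if_splits)
qed simp

lemma fa_A_add:
  assumes "x \<in> fa_A n" "y \<in> fa_A n"
  shows "(\<lambda>w. x w + y w) \<in> fa_A n"
proof (rule fa_A_if_support_subset[of "{w. x w \<noteq> 0} \<union> {w. y w \<noteq> 0}"])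
  fix w assume "x w + y w \<noteq> 0"
  then have "x w \<noteq> 0 \<or> y w \<noteq> 0"
    by auto
  then show "w \<in> {w. x w \<noteq> 0} \<union> {w. y w \<noteq> 0} \<and> set w \<subseteq> {..<2*n}"
    using assms by (auto simp: fa_A_def)
qed (use assms in \<open>simp add: fa_A_def\<close>)

lemma fa_A_uminus: "x \<in> fa_A n \<Longrightarrow> (\<lambda>w. - x w) \<in> fa_A n"
  by (simp add: fa_A_def)

lemma fa_A_mul:
  assumes x: "x \<in> fa_A n" and y: "y \<in> fa_A n"
  shows "fa_mul x y \<in> fa_A n"
proof (rule fa_A_if_support_subset[of "(\<lambda>(p,q). p @ q) ` ({w. x w \<noteq> 0} \<times> {w. y w \<noteq> 0})"])
  fix w assume "fa_mul x y w \<noteq> 0"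
  then obtain k where k: "x (take k w) \<noteq> 0" "y (drop k w) \<noteq> 0"
    by (rule fa_mul_nonzero_split)
  then have "set (take k w) \<subseteq> {..<2*n}" "set (drop k w) \<subseteq> {..<2*n}"
    using x y by (auto simp: fa_A_def)
  then have "set w \<subseteq> {..<2*n}"
    by (metis append_take_drop_id le_sup_iff set_append)
  moreover have "w \<in> (\<lambda>(p,q). p @ q) ` ({w. x w \<noteq> 0} \<times> {w. y w \<noteq> 0})"
    using k by (intro image_eqI[of _ _ "(take k w, drop k w)"]) auto
  ultimately show "w \<in> (\<lambda>(p,q). p @ q) ` ({w. x w \<noteq> 0} \<times> {w. y w \<noteq> 0}) \<and> set w \<subseteq> {..<2*n}"
    by blast
qed (use x y in \<open>simp add: fa_A_def\<close>)

lemma fa_A_cstar: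
  assumes "x \<in> fa_A n"
  shows "cstar x \<in> fa_A n"
proof (rule fa_A_if_support_subset[of "rev ` {w. x w \<noteq> 0}"])
  fix w assume "cstar x w \<noteq> 0"
  then have "x (rev w) \<noteq> 0"
    by (simp add: cstar_def)
  then have "set (rev w) \<subseteq> {..<2*n}"
    using assms unfolding fa_A_def by blast
  then have "set w \<subseteq> {..<2*n}"
    by simp
  moreover have "w \<in> rev ` {w. x w \<noteq> 0}"
    using \<open>x (rev w) \<noteq> 0\<close> by (auto intro: image_eqI[of _ _ "rev w"])
  ultimately show "w \<in> rev ` {w. x w \<noteq> 0} \<and> set w \<subseteq> {..<2*n}"
    by blast
qed (use assms in \<open>simp add: fa_A_def\<close>)

(* A type copy of all coefficient functions, so that the generic ring theory applies: the
   product is defined wordwise, so the ring laws need no support condition, and membership in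
   fa_A n is tracked separately by fa_elem. *)
typedef (overloaded) 'a free_alg = "UNIV :: (nat list \<Rightarrow> 'a::comm_ring_1) set"
  morphisms fa_coeff Abs_free_alg by auto

setup_lifting type_definition_free_alg

instantiation free_alg :: (comm_ring_1) ring_1
begin
lift_definition zero_free_alg :: "'a free_alg" is "\<lambda>w. 0" .
lift_definition one_free_alg :: "'a free_alg" is fa_one .
lift_definition plus_free_alg :: "'a free_alg \<Rightarrow> 'a free_alg \<Rightarrow> 'a free_alg" is "\<lambda>x y w. x w + y w" .
lift_definition minus_free_alg :: "'a free_alg \<Rightarrow> 'a free_alg \<Rightarrow> 'a free_alg" is "\<lambda>x y w. x w - y w" .
lift_definition uminus_free_alg :: "'a free_alg \<Rightarrow> 'a free_alg" is "\<lambda>x w. - x w" .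
lift_definition times_free_alg :: "'a free_alg \<Rightarrow> 'a free_alg \<Rightarrow> 'a free_alg" is fa_mul .
instance
proof
  fix a b c :: "'a free_alg"
  show "a * b * c = a * (b * c)" by transfer (rule fa_mul_assoc)
  show "1 * a = a" by transfer (rule fa_mul_one_left)
  show "a * 1 = a" by transfer (rule fa_mul_one_right)
  show "(a + b) * c = a * c + b * c" by transfer (simp add: fa_mul_def distrib_right sum.distrib)
  show "a * (b + c) = a * b + a * c" by transfer (simp add: fa_mul_def distrib_left sum.distrib)
  show "a + b + c = a + (b + c)" by transfer (simp add: add.assoc)
  show "a + b = b + a" by transfer (simp add: add.commute)
  show "0 + a = a" by transfer simp
  show "- a + a = 0" by transfer simp
  show "a - b = a + - b" by transfer simp
  show "(0::'a free_alg) \<noteq> 1" by transfer (auto simp: fa_one_def fun_eq_iff)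
qed
end

lift_definition fa_scalar :: "'a::comm_ring_1 \<Rightarrow> 'a free_alg" is "\<lambda>c w. if w = [] then c else 0" .
lift_definition fa_star :: "'a::comm_ring_1 free_alg \<Rightarrow> 'a free_alg" is cstar .
lift_definition fa_vec :: "nat \<Rightarrow> (nat \<Rightarrow> 'a::comm_ring_1) \<Rightarrow> 'a free_alg" is vec .

lemmas fa_coeff_simps [simp] =
  zero_free_alg.rep_eq one_free_alg.rep_eq plus_free_alg.rep_eq minus_free_alg.rep_eq
  uminus_free_alg.rep_eq times_free_alg.rep_eq fa_scalar.rep_eq fa_star.rep_eq fa_vec.rep_eq

lemma free_alg_eqI: "(\<And>w. fa_coeff X w = fa_coeff Y w) \<Longrightarrow> X = Y"
  by (metis fa_coeff_inject ext)

lemma fa_coeff_scalar_mult: "fa_coeff (fa_scalar c * X) w = c * fa_coeff X w"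
proof -
  have "fa_coeff (fa_scalar c * X) w = (\<Sum>k\<le>length w. if k = 0 then c * fa_coeff X w else 0)"
    unfolding fa_coeff_simps fa_mul_def by (rule sum.cong) auto
  then show ?thesis by simp
qed

lemma fa_coeff_mult_scalar: "fa_coeff (X * fa_scalar c) w = c * fa_coeff X w"
proof -
  have "fa_coeff (X * fa_scalar c) w = (\<Sum>k\<le>length w. if k = length w then c * fa_coeff X w else 0)"
    unfolding fa_coeff_simps fa_mul_def by (rule sum.cong) (auto simp: mult.commute)
  then show ?thesis by simp
qed

lemma fa_scalar_mult_commute: "fa_scalar c * X = X * fa_scalar c"
  by (rule free_alg_eqI) (simp only: fa_coeff_scalar_mult fa_coeff_mult_scalar)

lemma fa_scalar_add: "fa_scalar (c + d) = fa_scalar c + fa_scalar d"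
  by transfer auto

lemma fa_scalar_diff: "fa_scalar (c - d) = fa_scalar c - fa_scalar d"
  by transfer auto

lemma fa_scalar_minus_one: "fa_scalar (- 1) = - 1"
  by transfer (auto simp: fa_one_def)

lemma fa_scalar_zero [simp]: "fa_scalar 0 = 0"
  by transfer auto

lemma fa_scalar_mult_vec: "fa_scalar c * fa_vec n a = fa_vec n (\<lambda>k. c * a k)"
  by (rule free_alg_eqI)
    (auto simp: fa_coeff_scalar_mult vec_def simp del: times_free_alg.rep_eq split: list.splits)

lemma fa_vec_add: "fa_vec n a + fa_vec n b = fa_vec n (\<lambda>k. a k + b k)"
  by (rule free_alg_eqI) (auto simp: vec_def split: list.splits)

lemma fa_vec_diff: "fa_vec n a - fa_vec n b = fa_vec n (\<lambda>k. a k - b k)"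
  by (rule free_alg_eqI) (auto simp: vec_def split: list.splits)

lemma fa_vec_cong: "(\<And>k. k < 2*n \<Longrightarrow> a k = b k) \<Longrightarrow> fa_vec n a = fa_vec n b"
  by (rule free_alg_eqI) (auto simp: vec_def split: list.splits)

lemma fa_star_mult: "fa_star (X * Y) = fa_star Y * fa_star X"
  by transfer (rule cstar_fa_mul)

lemma fa_star_add: "fa_star (X + Y) = fa_star X + fa_star Y"
  by transfer (simp add: cstar_def)

lemma fa_star_one [simp]: "fa_star 1 = 1"
  by transfer (simp add: cstar_def fa_one_def)

lemma fa_star_vec: "fa_star (fa_vec n u) = fa_vec n u"
  by transfer (auto simp: cstar_def vec_def fun_eq_iff split: list.splits)

section \<open>The Clifford congruence\<close>

definition fa_elem :: "nat \<Rightarrow> 'a::comm_ring_1 free_alg \<Rightarrow> bool" where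
  "fa_elem n X \<longleftrightarrow> fa_coeff X \<in> fa_A n"

definition in_cl_ideal :: "nat \<Rightarrow> 'a::comm_ring_1 free_alg \<Rightarrow> bool" where
  "in_cl_ideal n X \<longleftrightarrow> fa_coeff X \<in> cl_ideal n"

definition cl_cong :: "nat \<Rightarrow> 'a::comm_ring_1 free_alg \<Rightarrow> 'a free_alg \<Rightarrow> bool" where
  "cl_cong n X Y \<longleftrightarrow> in_cl_ideal n (X - Y)"

lemma cl_cong_iff_cl_eq: "cl_cong n X Y \<longleftrightarrow> cl_eq n (fa_coeff X) (fa_coeff Y)"
  by (simp add: cl_cong_def in_cl_ideal_def cl_eq_def)

lemma fa_elem_one: "fa_elem n 1"
  by (simp add: fa_elem_def fa_A_one)

lemma fa_elem_scalar: "fa_elem n (fa_scalar c)"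
  by (simp add: fa_elem_def fa_A_scalar)

lemma fa_elem_vec: "fa_elem n (fa_vec n u)"
  by (simp add: fa_elem_def fa_A_vec)

lemma fa_elem_add: "fa_elem n X \<Longrightarrow> fa_elem n Y \<Longrightarrow> fa_elem n (X + Y)"
  by (simp add: fa_elem_def fa_A_add)

lemma fa_elem_diff: "fa_elem n X \<Longrightarrow> fa_elem n Y \<Longrightarrow> fa_elem n (X - Y)"
  unfolding fa_elem_def using fa_A_add[OF _ fa_A_uminus, of "fa_coeff X" n "fa_coeff Y"] by simp

lemma fa_elem_mult: "fa_elem n X \<Longrightarrow> fa_elem n Y \<Longrightarrow> fa_elem n (X * Y)"
  by (simp add: fa_elem_def fa_A_mul)

lemma fa_elem_star: "fa_elem n X \<Longrightarrow> fa_elem n (fa_star X)"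
  by (simp add: fa_elem_def fa_A_cstar)

lemmas fa_elem_intros =
  fa_elem_one fa_elem_scalar fa_elem_vec fa_elem_add fa_elem_diff fa_elem_mult fa_elem_star

lemma in_cl_ideal_add: "in_cl_ideal n X \<Longrightarrow> in_cl_ideal n Y \<Longrightarrow> in_cl_ideal n (X + Y)"
  by (simp add: in_cl_ideal_def cl_ideal.cl_add)

lemma in_cl_ideal_mult_left: "in_cl_ideal n X \<Longrightarrow> fa_elem n C \<Longrightarrow> in_cl_ideal n (C * X)"
  using cl_ideal.cl_mul[of "fa_coeff X" n "fa_coeff C" fa_one]
  by (simp add: in_cl_ideal_def fa_elem_def fa_A_one fa_mul_one_right)

lemma in_cl_ideal_mult_right: "in_cl_ideal n X \<Longrightarrow> fa_elem n C \<Longrightarrow> in_cl_ideal n (X * C)"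
  using cl_ideal.cl_mul[of "fa_coeff X" n fa_one "fa_coeff C"]
  by (simp add: in_cl_ideal_def fa_elem_def fa_A_one fa_mul_one_left)

lemma in_cl_ideal_uminus: "in_cl_ideal n X \<Longrightarrow> in_cl_ideal n (- X)"
  using in_cl_ideal_mult_left[OF _ fa_elem_scalar, of n X "- 1"]
  by (simp add: fa_scalar_minus_one)

lemma in_cl_ideal_diff: "in_cl_ideal n X \<Longrightarrow> in_cl_ideal n Y \<Longrightarrow> in_cl_ideal n (X - Y)"
  unfolding diff_conv_add_uminus by (intro in_cl_ideal_add in_cl_ideal_uminus)

lemma in_cl_ideal_vec_square: "in_cl_ideal n (fa_vec n u * fa_vec n u - fa_scalar (qH n u))"
proof -
  have "fa_coeff (fa_vec n u * fa_vec n u - fa_scalar (qH n u))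
      = (\<lambda>w. fa_mul (vec n u) (vec n u) w - qH n u * fa_one w)"
    by (simp add: fun_eq_iff fa_one_def)
  then show ?thesis by (simp add: in_cl_ideal_def cl_ideal.cl_gen)
qed

lemma in_cl_ideal_isotropic_vec_square:
  "qH n u = 0 \<Longrightarrow> in_cl_ideal n (fa_vec n u * fa_vec n u)"
  using in_cl_ideal_vec_square[of n u] by simp

lemma cl_cong_refl: "cl_cong n X X"
  by (simp add: cl_cong_def in_cl_ideal_def cl_ideal.cl_zero)

lemma cl_cong_trans [trans]: "cl_cong n X Y \<Longrightarrow> cl_cong n Y Z \<Longrightarrow> cl_cong n X Z"
  unfolding cl_cong_def by (drule (1) in_cl_ideal_add) simp

lemma cl_cong_mult_left: "cl_cong n X Y \<Longrightarrow> fa_elem n C \<Longrightarrow> cl_cong n (C * X) (C * Y)"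
  unfolding cl_cong_def by (drule (1) in_cl_ideal_mult_left) (simp add: algebra_simps)

lemma cl_cong_mult_right: "cl_cong n X Y \<Longrightarrow> fa_elem n C \<Longrightarrow> cl_cong n (X * C) (Y * C)"
  unfolding cl_cong_def by (drule (1) in_cl_ideal_mult_right) (simp add: algebra_simps)

section \<open>Elementary matrices\<close>

lemma dperm_less: "i < 2*n \<Longrightarrow> dperm n i < 2*n"
  by (auto simp: dperm_def)

lemma dperm_dperm: "i < 2*n \<Longrightarrow> dperm n (dperm n i) = i"
  unfolding dperm_def by arith

lemma dperm_neq: "i < 2*n \<Longrightarrow> dperm n i \<noteq> i"
  by (auto simp: dperm_def)

lemma dperm_eq_iff: "i < 2*n \<Longrightarrow> j < 2*n \<Longrightarrow> dperm n i = dperm n j \<longleftrightarrow> i = j"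
  by (auto simp: dperm_def split: if_splits)

lemma mv_mmul: "mv n (mmul n A B) z = mv n A (mv n B z)"
  unfolding mv_def mmul_def sum_distrib_right sum_distrib_left mult.assoc
  by (rule ext sum.swap)+

lemma mv_cong: "(\<And>k. k < 2*n \<Longrightarrow> z k = z' k) \<Longrightarrow> mv n M z = mv n M z'"
  unfolding mv_def by (intro ext sum.cong) auto

lemma mv_idm:
  assumes "a < 2*n"
  shows "mv n idm z a = z a"
proof -
  have "mv n idm z a = (\<Sum>k<2*n. if a = k then z k else 0)"
    unfolding mv_def idm_def by (intro sum.cong) auto
  then show ?thesis using assms by simp
qed

lemma mv_Eo:
  assumes "i < 2*n" "j < 2*n" "a < 2*n"
  shows "mv n (Eo n i j l) z a
    = z a + l * ((if a = i then z j else 0) - (if a = dperm n j then z (dperm n i) else 0))"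
proof -
  have "mv n (Eo n i j l) z a = (\<Sum>b<2*n. (if a = b then z b else 0)
      + l * ((if a = i then (if b = j then z b else 0) else 0)
             - (if a = dperm n j then (if b = dperm n i then z b else 0) else 0)))"
    unfolding mv_def Eo_def idm_def by (intro sum.cong) (auto simp: algebra_simps)
  also have "\<dots> = z a + l * ((if a = i then z j else 0) - (if a = dperm n j then z (dperm n i) else 0))"
    using assms dperm_less[of i n]
    by (simp add: sum.distrib sum_subtractf sum_distrib_left[symmetric])
  finally show ?thesis .
qed

lemma mv_Eo_inverse:
  assumes "i < 2*n" "j < 2*n" "i \<noteq> j" "k < 2*n"
  shows "mv n (Eo n i j l) (mv n (Eo n i j (- l)) z) k = z k"
  using assms dperm_less[of i n] dperm_less[of j n] dperm_neq[of i n] dperm_neq[of j n]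
    dperm_eq_iff[of i n j]
  by (auto simp: mv_Eo algebra_simps)

section \<open>Isotropic vectors in the Clifford algebra\<close>

definition polar :: "nat \<Rightarrow> (nat \<Rightarrow> 'a::comm_ring_1) \<Rightarrow> (nat \<Rightarrow> 'a) \<Rightarrow> 'a" where
  "polar n a b = qH n (\<lambda>k. a k + b k) - qH n a - qH n b"

lemma polar_eq: "polar n a b = (\<Sum>k<n. a k * b (n+k) + b k * a (n+k))"
  by (simp add: polar_def qH_def algebra_simps sum.distrib sum_subtractf)

lemma in_cl_ideal_vec_anticommutator:
  "in_cl_ideal n (fa_vec n a * fa_vec n b + fa_vec n b * fa_vec n a - fa_scalar (polar n a b))"
proof -
  have "fa_vec n a * fa_vec n b + fa_vec n b * fa_vec n a - fa_scalar (polar n a b) =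
     (fa_vec n (\<lambda>k. a k + b k) * fa_vec n (\<lambda>k. a k + b k) - fa_scalar (qH n (\<lambda>k. a k + b k)))
     - (fa_vec n a * fa_vec n a - fa_scalar (qH n a))
     - (fa_vec n b * fa_vec n b - fa_scalar (qH n b))"
    by (simp add: fa_vec_add[symmetric] polar_def fa_scalar_add fa_scalar_diff algebra_simps)
  then show ?thesis by (simp add: in_cl_ideal_diff in_cl_ideal_vec_square)
qed

lemma in_cl_ideal_orthogonal_anticommutator:
  "polar n a b = 0 \<Longrightarrow> in_cl_ideal n (fa_vec n a * fa_vec n b + fa_vec n b * fa_vec n a)"
  using in_cl_ideal_vec_anticommutator[of n a b] by simp

lemma cl_cong_conj_one_plus_mult:
  fixes x u z :: "'a::comm_ring_1 free_alg"
  assumes x: "fa_elem n x" and u: "fa_elem n u" and z: "fa_elem n z"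
    and xx: "in_cl_ideal n (x*x)" and uu: "in_cl_ideal n (u*u)" and xu: "in_cl_ideal n (x*u + u*x)"
    and xz: "in_cl_ideal n (x*z + z*x - fa_scalar bxz)"
    and uz: "in_cl_ideal n (u*z + z*u - fa_scalar buz)"
  shows "cl_cong n ((1 + x*u) * z * (1 + u*x)) (z + (fa_scalar buz * x - fa_scalar bxz * u))"
proof -
  have commute: "x * fa_scalar b = fa_scalar b * x" "u * fa_scalar b = fa_scalar b * u" for b
    by (simp_all add: fa_scalar_mult_commute)
  have "(1 + x*u) * z * (1 + u*x) - (z + (fa_scalar buz * x - fa_scalar bxz * u))
    = x * (u*z + z*u - fa_scalar buz) - (x*z + z*x - fa_scalar bxz) * u + z * (x*u + u*x)
      + x * (u*z + z*u - fa_scalar buz) * u * x + fa_scalar buz * x * (x*u + u*x)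
      - fa_scalar buz * (x*x) * u - x * z * (u*u) * x"
    by (simp add: algebra_simps commute)
  moreover have "in_cl_ideal n (x * (u*z + z*u - fa_scalar buz))"
    "in_cl_ideal n ((x*z + z*x - fa_scalar bxz) * u)" "in_cl_ideal n (z * (x*u + u*x))"
    "in_cl_ideal n (x * (u*z + z*u - fa_scalar buz) * u * x)"
    "in_cl_ideal n (fa_scalar buz * x * (x*u + u*x))"
    "in_cl_ideal n (fa_scalar buz * (x*x) * u)" "in_cl_ideal n (x * z * (u*u) * x)"
    by (intro in_cl_ideal_mult_left in_cl_ideal_mult_right fa_elem_intros x u z xx uu xu xz uz)+
  ultimately show ?thesis
    unfolding cl_cong_def by (simp only:) (intro in_cl_ideal_add in_cl_ideal_diff)
qed

lemma cl_cong_one_plus_mult_inverse: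
  fixes x u :: "'a::comm_ring_1 free_alg"
  assumes x: "fa_elem n x" and uu: "in_cl_ideal n (u*u)" and xu: "in_cl_ideal n (x*u + u*x)"
  shows "cl_cong n ((1 + x*u) * (1 + u*x)) 1"
proof -
  have "(1 + x*u) * (1 + u*x) - 1 = (x*u + u*x) + x * (u*u) * x"
    by (simp add: algebra_simps)
  moreover have "in_cl_ideal n (x * (u*u) * x)"
    by (intro in_cl_ideal_mult_left in_cl_ideal_mult_right x uu)
  ultimately show ?thesis
    unfolding cl_cong_def using xu by (simp add: in_cl_ideal_add)
qed

lemma one_plus_vec_mult_conj:
  assumes "qH n a = 0" "qH n b = 0" "polar n a b = 0"
  shows "cl_cong n ((1 + fa_vec n a * fa_vec n b) * fa_vec n z * fa_star (1 + fa_vec n a * fa_vec n b))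
    (fa_vec n (\<lambda>k. z k + polar n b z * a k - polar n a z * b k))"
proof -
  have "fa_star (1 + fa_vec n a * fa_vec n b) = 1 + fa_vec n b * fa_vec n a"
    by (simp add: fa_star_add fa_star_mult fa_star_vec)
  moreover have "cl_cong n ((1 + fa_vec n a * fa_vec n b) * fa_vec n z * (1 + fa_vec n b * fa_vec n a))
      (fa_vec n z + (fa_scalar (polar n b z) * fa_vec n a - fa_scalar (polar n a z) * fa_vec n b))"
    using assms
    by (intro cl_cong_conj_one_plus_mult fa_elem_vec in_cl_ideal_isotropic_vec_square
        in_cl_ideal_orthogonal_anticommutator in_cl_ideal_vec_anticommutator)
  moreover have "fa_vec n z + (fa_scalar (polar n b z) * fa_vec n a - fa_scalar (polar n a z) * fa_vec n b)
      = fa_vec n (\<lambda>k. z k + polar n b z * a k - polar n a z * b k)"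
    unfolding fa_scalar_mult_vec fa_vec_diff fa_vec_add by (simp add: algebra_simps)
  ultimately show ?thesis
    by simp
qed

lemma one_plus_vec_mult_star_inverse:
  assumes "qH n a = 0" "qH n b = 0" "polar n a b = 0"
  shows "cl_cong n ((1 + fa_vec n a * fa_vec n b) * fa_star (1 + fa_vec n a * fa_vec n b)) 1"
    and "cl_cong n (fa_star (1 + fa_vec n a * fa_vec n b) * (1 + fa_vec n a * fa_vec n b)) 1"
proof -
  have star: "fa_star (1 + fa_vec n a * fa_vec n b) = 1 + fa_vec n b * fa_vec n a"
    by (simp add: fa_star_add fa_star_mult fa_star_vec)
  have "polar n b a = 0"
    using assms(3) by (simp add: polar_eq add.commute)
  then show "cl_cong n ((1 + fa_vec n a * fa_vec n b) * fa_star (1 + fa_vec n a * fa_vec n b)) 1"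
    and "cl_cong n (fa_star (1 + fa_vec n a * fa_vec n b) * (1 + fa_vec n a * fa_vec n b)) 1"
    unfolding star using assms
    by (intro cl_cong_one_plus_mult_inverse fa_elem_vec in_cl_ideal_isotropic_vec_square
        in_cl_ideal_orthogonal_anticommutator; simp)+
qed

definition basis_vec :: "nat \<Rightarrow> nat \<Rightarrow> 'a::comm_ring_1" where
  "basis_vec a = (\<lambda>k. if k = a then 1 else 0)"

lemma qH_scaled_basis_vec: "qH n (\<lambda>k. c * basis_vec a k) = 0"
  by (auto simp: qH_def basis_vec_def intro!: sum.neutral)

lemma polar_scaled_basis_vec:
  assumes "a < 2*n"
  shows "polar n (\<lambda>k. c * basis_vec a k) z = c * z (dperm n a)"
proof (cases "a < n")
  case True
  have "polar n (\<lambda>k. c * basis_vec a k) z = (\<Sum>k<n. if k = a then c * z (n + a) else 0)"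
    unfolding polar_eq using True by (intro sum.cong) (auto simp: basis_vec_def)
  then show ?thesis using True by (simp add: dperm_def add.commute)
next
  case False
  then have "a - n < n" using assms by arith
  have "polar n (\<lambda>k. c * basis_vec a k) z = (\<Sum>k<n. if k = a - n then c * z (a - n) else 0)"
    unfolding polar_eq using False assms by (intro sum.cong) (auto simp: basis_vec_def mult.commute)
  then show ?thesis using False \<open>a - n < n\<close> by (simp add: dperm_def)
qed

section \<open>Lifting EO to Spin\<close>

definition is_odd :: "(nat list \<Rightarrow> 'a::comm_ring_1) \<Rightarrow> bool" where
  "is_odd x \<longleftrightarrow> (\<forall>w. even (length w) \<longrightarrow> x w = 0)"

lemma is_even_one: "is_even fa_one"
  by (auto simp: is_even_def fa_one_def)

lemma is_odd_vec: "is_odd (vec n u)"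
  unfolding is_odd_def
proof (intro allI impI)
  fix w :: "nat list" assume "even (length w)"
  then show "vec n u w = 0"
    by (cases w rule: remdups_adj.cases) (auto simp: vec_def)
qed

lemma is_even_add: "is_even x \<Longrightarrow> is_even y \<Longrightarrow> is_even (\<lambda>w. x w + y w)"
  by (simp add: is_even_def)

lemma fa_mul_eq_zero_by_parity:
  assumes "\<And>k. k \<le> length w \<Longrightarrow> x (take k w) = 0 \<or> y (drop k w) = 0"
  shows "fa_mul x y w = 0"
  unfolding fa_mul_def using assms by (intro sum.neutral) (metis atMost_iff mult_zero_left mult_zero_right)

lemma is_even_mul_odd_odd:
  assumes "is_odd x" "is_odd y"
  shows "is_even (fa_mul x y)"
  unfolding is_even_def
proof (intro allI impI fa_mul_eq_zero_by_parity)
  fix w :: "nat list" and k assume "odd (length w)" "k \<le> length w"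
  then have "even (length (take k w)) \<or> even (length (drop k w))"
    by (auto simp: min_def even_diff_nat)
  then show "x (take k w) = 0 \<or> y (drop k w) = 0"
    using assms by (auto simp: is_odd_def)
qed

lemma is_even_mul_even_even:
  assumes "is_even x" "is_even y"
  shows "is_even (fa_mul x y)"
  unfolding is_even_def
proof (intro allI impI fa_mul_eq_zero_by_parity)
  fix w :: "nat list" and k assume "odd (length w)" "k \<le> length w"
  then have "odd (length (take k w)) \<or> odd (length (drop k w))"
    by (auto simp: min_def even_diff_nat)
  then show "x (take k w) = 0 \<or> y (drop k w) = 0"
    using assms by (auto simp: is_even_def)
qed

lemma fa_coeff_in_Spin_iff:
  "fa_coeff G \<in> Spin n \<longleftrightarrow> fa_elem n G \<and> is_even (fa_coeff G)
     \<and> cl_cong n (G * fa_star G) 1 \<and> cl_cong n (fa_star G * G) 1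
     \<and> (\<forall>u. \<exists>u'. cl_cong n (G * fa_vec n u * fa_star G) (fa_vec n u'))
     \<and> (\<forall>u'. \<exists>u. cl_cong n (G * fa_vec n u * fa_star G) (fa_vec n u'))"
  by (simp add: Spin_def fa_elem_def cl_cong_iff_cl_eq)

lemma Spin_mult:
  assumes G: "fa_coeff G \<in> Spin n" and H: "fa_coeff H \<in> Spin n"
  shows "fa_coeff (G * H) \<in> Spin n"
proof -
  from G have G_elem: "fa_elem n G" and G_inv: "cl_cong n (G * fa_star G) 1" "cl_cong n (fa_star G * G) 1"
    and G_to: "\<forall>u. \<exists>u'. cl_cong n (G * fa_vec n u * fa_star G) (fa_vec n u')"
    and G_onto: "\<forall>u'. \<exists>u. cl_cong n (G * fa_vec n u * fa_star G) (fa_vec n u')"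
    by (simp_all add: fa_coeff_in_Spin_iff)
  from H have H_elem: "fa_elem n H" and H_inv: "cl_cong n (H * fa_star H) 1" "cl_cong n (fa_star H * H) 1"
    and H_to: "\<forall>u. \<exists>u'. cl_cong n (H * fa_vec n u * fa_star H) (fa_vec n u')"
    and H_onto: "\<forall>u'. \<exists>u. cl_cong n (H * fa_vec n u * fa_star H) (fa_vec n u')"
    by (simp_all add: fa_coeff_in_Spin_iff)
  have conj: "G * H * Y * fa_star (G * H) = G * (H * Y * fa_star H) * fa_star G" for Y
    by (simp add: fa_star_mult mult.assoc)
  have conj_cong: "cl_cong n (G * H * Y * fa_star (G * H)) (G * Y' * fa_star G)"
    if "cl_cong n (H * Y * fa_star H) Y'" for Y Y'
    unfolding conj using that by (intro cl_cong_mult_left cl_cong_mult_right G_elem fa_elem_star)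
  have "cl_cong n (G * H * fa_star (G * H)) 1"
    using conj_cong[of 1 1, simplified] G_inv(1) H_inv(1) cl_cong_trans by blast
  moreover have "cl_cong n (fa_star (G * H) * (G * H)) 1"
  proof -
    have "fa_star (G * H) * (G * H) = fa_star H * (fa_star G * G) * H"
      by (simp add: fa_star_mult mult.assoc)
    also have "cl_cong n \<dots> (fa_star H * 1 * H)"
      by (intro cl_cong_mult_left cl_cong_mult_right G_inv H_elem fa_elem_star)
    also have "fa_star H * 1 * H = fa_star H * H" by simp
    also have "cl_cong n \<dots> 1" by (rule H_inv(2))
    finally show ?thesis .
  qed
  moreover have "\<exists>u'. cl_cong n (G * H * fa_vec n u * fa_star (G * H)) (fa_vec n u')" for u
    using G_to H_to conj_cong cl_cong_trans by meson
  moreover have "\<exists>u. cl_cong n (G * H * fa_vec n u * fa_star (G * H)) (fa_vec n u')" for u'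
    using G_onto H_onto conj_cong cl_cong_trans by meson
  moreover have "fa_elem n (G * H)" using G_elem H_elem by (rule fa_elem_mult)
  moreover have "is_even (fa_coeff (G * H))"
    using G H by (simp add: fa_coeff_in_Spin_iff is_even_mul_even_even)
  ultimately show ?thesis
    unfolding fa_coeff_in_Spin_iff by blast
qed

definition spin_lift :: "nat \<Rightarrow> (nat \<Rightarrow> nat \<Rightarrow> 'a::comm_ring_1) \<Rightarrow> 'a free_alg \<Rightarrow> bool" where
  "spin_lift n M G \<longleftrightarrow> fa_coeff G \<in> Spin n
     \<and> (\<forall>z. cl_cong n (G * fa_vec n z * fa_star G) (fa_vec n (mv n M z)))"

lemma spin_lift_if_right_inverse:
  assumes "fa_elem n G" "is_even (fa_coeff G)"
    and "cl_cong n (G * fa_star G) 1" "cl_cong n (fa_star G * G) 1"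
    and conj: "\<And>z. cl_cong n (G * fa_vec n z * fa_star G) (fa_vec n (mv n M z))"
    and right_inverse: "\<And>z k. k < 2*n \<Longrightarrow> mv n M (mv n M' z) k = z k"
  shows "spin_lift n M G"
proof -
  have "cl_cong n (G * fa_vec n (mv n M' z) * fa_star G) (fa_vec n z)" for z
    using conj[of "mv n M' z"] fa_vec_cong[of n "mv n M (mv n M' z)" z] right_inverse by simp
  then show ?thesis
    using assms unfolding spin_lift_def fa_coeff_in_Spin_iff by blast
qed

lemma spin_lift_idm: "spin_lift n idm 1"
proof (rule spin_lift_if_right_inverse[where M' = idm])
  show "cl_cong n (1 * fa_vec n z * fa_star 1) (fa_vec n (mv n idm z))" for z
    using fa_vec_cong[of n "mv n idm z" z] by (simp add: mv_idm cl_cong_refl)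
qed (simp_all add: fa_elem_one is_even_one mv_idm cl_cong_refl)

lemma spin_lift_mmul:
  assumes "spin_lift n M G" "spin_lift n E g"
  shows "spin_lift n (mmul n M E) (G * g)"
  unfolding spin_lift_def
proof (intro conjI allI)
  show "fa_coeff (G * g) \<in> Spin n"
    using assms by (simp add: spin_lift_def Spin_mult del: fa_coeff_simps)
  have G_elem: "fa_elem n G"
    using assms(1) by (simp add: spin_lift_def fa_coeff_in_Spin_iff del: fa_coeff_simps)
  fix z
  have "G * g * fa_vec n z * fa_star (G * g) = G * (g * fa_vec n z * fa_star g) * fa_star G"
    by (simp add: fa_star_mult mult.assoc)
  also have "cl_cong n \<dots> (G * fa_vec n (mv n E z) * fa_star G)"
    using assms(2) by (intro cl_cong_mult_left cl_cong_mult_right G_elem fa_elem_star)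
      (simp add: spin_lift_def)
  also have "cl_cong n \<dots> (fa_vec n (mv n M (mv n E z)))"
    using assms(1) by (simp add: spin_lift_def)
  finally show "cl_cong n (G * g * fa_vec n z * fa_star (G * g)) (fa_vec n (mv n (mmul n M E) z))"
    by (simp add: mv_mmul)
qed

lemma spin_lift_Eo:
  fixes l :: "'a::comm_ring_1"
  assumes ij: "i < 2*n" "j < 2*n" "i \<noteq> j"
  defines "a \<equiv> \<lambda>k. l * basis_vec i k" and "b \<equiv> basis_vec (dperm n j)"
  shows "spin_lift n (Eo n i j l) (1 + fa_vec n a * fa_vec n b)"
proof -
  have dj: "dperm n j < 2*n"
    using ij by (simp add: dperm_less)
  have polar_a: "polar n a z = l * z (dperm n i)" for z
    unfolding a_def using ij by (simp add: polar_scaled_basis_vec)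
  have polar_b: "polar n b z = z j" for z
    using polar_scaled_basis_vec[OF dj, of 1 z] ij by (simp add: b_def dperm_dperm)
  have "qH n a = 0"
    unfolding a_def by (rule qH_scaled_basis_vec)
  moreover have "qH n b = 0"
    using qH_scaled_basis_vec[of n 1 "dperm n j"] by (simp add: b_def)
  moreover have "polar n a b = 0"
    using ij by (simp add: polar_a b_def basis_vec_def dperm_eq_iff)
  ultimately have iso: "qH n a = 0" "qH n b = 0" "polar n a b = 0"
    by blast+
  have "cl_cong n ((1 + fa_vec n a * fa_vec n b) * fa_vec n z * fa_star (1 + fa_vec n a * fa_vec n b))
      (fa_vec n (mv n (Eo n i j l) z))" for z
  proof -
    have "fa_vec n (\<lambda>k. z k + polar n b z * a k - polar n a z * b k) = fa_vec n (mv n (Eo n i j l) z)"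
      unfolding polar_a polar_b using ij
      by (intro fa_vec_cong) (auto simp: mv_Eo a_def b_def basis_vec_def algebra_simps)
    then show ?thesis
      using one_plus_vec_mult_conj[OF iso, of z] by simp
  qed
  then show ?thesis
    using one_plus_vec_mult_star_inverse[OF iso] mv_Eo_inverse[OF ij]
    by (intro spin_lift_if_right_inverse[where M' = "Eo n i j (- l)"])
      (simp_all add: fa_elem_intros is_even_add is_even_one is_even_mul_odd_odd is_odd_vec)
qed

lemma EO_spin_lift:
  assumes "M \<in> EO n"
  shows "\<exists>G. spin_lift n M G"
  using assms
proof (induction rule: EO.induct)
  case EO_id
  then show ?case using spin_lift_idm by blast
next
  case (EO_step M i j l)
  then obtain G where "spin_lift n M G"
    by blast
  then show ?case
    using spin_lift_mmul spin_lift_Eo[OF EO_step.hyps(2-4)] by blast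
qed

lemma spin_lift_in_Epin: "M \<in> EO n \<Longrightarrow> spin_lift n M G \<Longrightarrow> fa_coeff G \<in> Epin n"
  by (auto simp: Epin_def spin_lift_def cl_cong_iff_cl_eq)

section \<open>Transvections fixing the first component\<close>

lemma hv_cong: "(\<And>m. m < n \<Longrightarrow> b m = b' m) \<Longrightarrow> i < 2*n \<Longrightarrow> hv n v b i = hv n v b' i"
  by (simp add: hv_def)

definition transvection_shift :: "(nat \<Rightarrow> 'a::comm_ring_1) \<Rightarrow> nat \<Rightarrow> nat \<Rightarrow> nat \<Rightarrow> 'a" where
  "transvection_shift v k j = (\<lambda>m. v j * basis_vec k m - v k * basis_vec j m)"

lemma mv_Eo_hv:
  assumes "k < n" "j < n" "i < 2*n"
  shows "mv n (Eo n (n+k) j c) (hv n v b) i = hv n v (\<lambda>m. b m + c * transvection_shift v k j m) i"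
  using assms by (auto simp: mv_Eo dperm_def hv_def transvection_shift_def basis_vec_def)

lemma EO_shift_second_component:
  assumes "finite P" "P \<subseteq> {..<n} \<times> {..<n}"
  shows "\<exists>M \<in> EO n. \<forall>b i. i < 2*n \<longrightarrow> mv n M (hv n v b) i
    = hv n v (\<lambda>m. b m + (\<Sum>(k,j)\<in>P. c k j * transvection_shift v k j m)) i"
  using assms
proof (induction P rule: finite_induct)
  case empty
  show ?case by (rule bexI[of _ idm]) (auto simp: mv_idm intro: EO.EO_id)
next
  case (insert p P)
  obtain k j where p: "p = (k, j)" by fastforce
  with insert.prems have kj: "k < n" "j < n" by auto
  from insert obtain M where M: "M \<in> EO n" and M_shift: "\<forall>b i. i < 2*n \<longrightarrow> mv n M (hv n v b) i
    = hv n v (\<lambda>m. b m + (\<Sum>(k,j)\<in>P. c k j * transvection_shift v k j m)) i"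
    by auto
  define E where "E = Eo n (n+k) j (c k j)"
  have "mmul n M E \<in> EO n"
    unfolding E_def using M kj by (intro EO.EO_step) auto
  moreover have "mv n (mmul n M E) (hv n v b) i
    = hv n v (\<lambda>m. b m + (\<Sum>(k,j)\<in>insert p P. c k j * transvection_shift v k j m)) i"
    if "i < 2*n" for b i
  proof -
    define b' where "b' = (\<lambda>m. b m + c k j * transvection_shift v k j m)"
    have "mv n E (hv n v b) q = hv n v b' q" if "q < 2*n" for q
      unfolding E_def b'_def using kj that by (rule mv_Eo_hv)
    then have "mv n (mmul n M E) (hv n v b) i = mv n M (hv n v b') i"
      by (simp add: mv_mmul cong: mv_cong)
    also have "\<dots> = hv n v (\<lambda>m. b' m
        + (\<Sum>(k,j)\<in>P. c k j * transvection_shift v k j m)) i"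
      using M_shift \<open>i < 2*n\<close> by blast
    finally show ?thesis
      using insert.hyps by (simp add: p b'_def algebra_simps)
  qed
  ultimately show ?case by blast
qed

lemma sum_transvection_shift_eq:
  assumes "qf n v w1 = 1" "qf n v w2 = 1" "m < n"
  shows "(\<Sum>(k,j)\<in>{..<n} \<times> {..<n}.
      (w2 k - w1 k) * w1 j * transvection_shift v k j m) = w2 m - w1 m"
proof -
  have "(\<Sum>(k,j)\<in>{..<n} \<times> {..<n}.
      (w2 k - w1 k) * w1 j * transvection_shift v k j m)
    = (\<Sum>k<n. (w2 k - w1 k) * basis_vec k m) * qf n v w1
      - (\<Sum>j<n. w1 j * basis_vec j m) * (qf n v w2 - qf n v w1)"
    unfolding sum.cartesian_product[symmetric] qf_def transvection_shift_def
    by (simp add: sum_distrib_left sum_distrib_right sum_subtractf[symmetric] algebra_simps)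
  also have "\<dots> = w2 m - w1 m"
    using assms by (simp add: basis_vec_def if_distrib cong: if_cong)
  finally show ?thesis .
qed

lemma EO_orbit_same_first_component:
  assumes "qf n v w1 = 1" "qf n v w2 = 1"
  shows "\<exists>M \<in> EO n. \<forall>i < 2*n. mv n M (hv n v w1) i = hv n v w2 i"
proof -
  obtain M where "M \<in> EO n" and M: "\<forall>b i. i < 2*n \<longrightarrow> mv n M (hv n v b) i
    = hv n v (\<lambda>m. b m + (\<Sum>(k,j)\<in>{..<n} \<times> {..<n}.
        (w2 k - w1 k) * w1 j * transvection_shift v k j m)) i"
    using EO_shift_second_component[of "{..<n} \<times> {..<n}" n v "\<lambda>k j. (w2 k - w1 k) * w1 j"]
    by auto
  moreover have "mv n M (hv n v w1) i = hv n v w2 i" if "i < 2*n" for i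
    using M that by (auto intro: hv_cong simp: sum_transvection_shift_eq assms)
  ultimately show ?thesis by blast
qed

theorem theorem4p3:
  fixes n :: nat and v w1 w2 :: "nat \<Rightarrow> 'a::comm_ring_1"
  assumes "n \<ge> 3" and "qf n v w1 = 1" and "qf n v w2 = 1"
  shows "(\<exists>M \<in> EO n. \<forall>i < 2*n. mv n M (hv n v w1) i = hv n v w2 i)
       \<and> (\<exists>g \<in> Epin n. cl_eq n (fa_mul (fa_mul g (vec n (hv n v w1))) (cstar g)) (vec n (hv n v w2)))"
proof -
  obtain M where M: "M \<in> EO n" and M_orbit: "\<forall>i < 2*n. mv n M (hv n v w1) i = hv n v w2 i"
    using EO_orbit_same_first_component assms(2,3) by blast
  obtain G where G: "spin_lift n M G"
    using EO_spin_lift[OF M] by blast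
  have "cl_cong n (G * fa_vec n (hv n v w1) * fa_star G) (fa_vec n (mv n M (hv n v w1)))"
    using G by (simp add: spin_lift_def)
  also have "fa_vec n (mv n M (hv n v w1)) = fa_vec n (hv n v w2)"
    using M_orbit by (intro fa_vec_cong) simp
  finally have "cl_eq n (fa_mul (fa_mul (fa_coeff G) (vec n (hv n v w1))) (cstar (fa_coeff G)))
      (vec n (hv n v w2))"
    by (simp add: cl_cong_iff_cl_eq)
  then show ?thesis
    using M M_orbit spin_lift_in_Epin[OF M G] by blast
qed

end
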